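(* Let $\mathbf H=\mathrm{diag}(H_1,\dots,H_n)$ with $H_i$ i.i.d. having a regular fading distribution, fix a realization $\mathbf H$, and let $S_{\mathbf H}=\mathbf HS$ be the received IC of an IC $S\subset\mathbb R^n$, with density $\gamma_{rc}(\mathbf H)$ and average error probability $P_e(S_{\mathbf H})=\epsilon(\mathbf H)$ (both as defined in the context). For any $\xi>0$, if $\mathbf H$ is not a $\xi$-strong fading realization, then there exists a regular IC $S'_{\mathbf H}$ with density $\gamma'_{rc}(\mathbf H)\ge\gamma_{rc}(\mathbf H)/(1+\xi)$ and average error probability $P_e(S'_{\mathbf H})\le\epsilon(\mathbf H)(1+\xi)$.
   Context: Regular fading distribution: PDF $f$ with $f(h)\propto h^{\alpha-1}$ for all small $h>0$, some $\alpha>0$. Noise $\mathbf z\sim N(0,\sigma^2I_n)$. For the received IC: $\mathrm{Cb}(a)=\{\mathbf x\in\mathbb R^n:|x_i|<a/2\}$, $M(S_{\mathbf H},a)=|S_{\mathbf H}\cap\mathbf H\mathrm{Cb}(a)|$, $\gamma_{rc}(\mathbf H)=\limsup_{a\to\infty}\frac{M(S_{\mathbf H},a)}{\mathrm{Vol}(\mathbf H\mathrm{Cb}(a))}$, and $P_e(S_{\mathbf H})=\limsup_{a\to\infty}\frac1{M(S_{\mathbf H},a)}\sum_{s\in S_{\mathbf H}\cap\mathbf H\mathrm{Cb}(a)}\Pr\{s+\mathbf z\notin W(s)\}$, with $W(s)$ the Voronoi cell of $s$ in $S_{\mathbf H}$; the same definitions apply to $S'_{\mathbf H}$. An IC $T$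 is regular if there is $r_0>0$ such that every Voronoi cell $W(s)$, $s\in T$, is contained in $\{\mathbf x:\|\mathbf x-s\|<r_0\}$. For $\xi>0$ let $h^*_{\min}(\xi)$ solve $\Pr\{\min(H_1,\dots,H_n)\le h^*_{\min}\}=\xi$; a realization $\mathbf H=\mathrm{diag}(h_1,\dots,h_n)$ is $\xi$-strong if $\min(h_1,\dots,h_n)\le h^*_{\min}(\xi)$. *)

theory Defs
  imports "HOL-Probability.Probability"
begin

text \<open>Points of R^n are vectors of type real^'n (n = CARD('n)).
  A diagonal channel matrix H = diag(h_1,...,h_n) is represented by the vector h of its
  diagonal entries; Hmap h x = H x.\<close>

definition Hmap :: "real^'n \<Rightarrow> real^'n \<Rightarrow> real^'n" where
  "Hmap h x = (\<chi> i. h $ i * x $ i)"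

definition IC :: "(real^'n) set \<Rightarrow> bool" where
  "IC S \<longleftrightarrow> countable S \<and> (\<forall>B. bounded B \<longrightarrow> finite (S \<inter> B))"

definition Cb :: "real \<Rightarrow> (real^'n) set" where
  "Cb a = {x. \<forall>i. \<bar>x $ i\<bar> < a / 2}"

definition M_count :: "(real^'n) set \<Rightarrow> real^'n \<Rightarrow> real \<Rightarrow> nat" where
  "M_count S h a = card (S \<inter> Hmap h ` Cb a)"

definition density_rc :: "(real^'n) set \<Rightarrow> real^'n \<Rightarrow> ereal" where
  "density_rc S h =
     Limsup at_top (\<lambda>a::real. ereal (real (M_count S h a) / measure lborel (Hmap h ` Cb a)))"

definition voronoi :: "(real^'n) set \<Rightarrow> real^'n \<Rightarrow> (real^'n) set" where
  "voronoi S s = {x. \<forall>t\<in>S. dist x s \<le> dist x t}"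

definition gauss_noise :: "real \<Rightarrow> (real^'n) measure" where
  "gauss_noise \<sigma> = density lborel
     (\<lambda>z::real^'n. ennreal ((2 * pi * \<sigma>\<^sup>2) powr (- real CARD('n) / 2)
                              * exp (- (norm z)\<^sup>2 / (2 * \<sigma>\<^sup>2))))"

definition err_prob :: "real \<Rightarrow> (real^'n) set \<Rightarrow> real^'n \<Rightarrow> real" where
  "err_prob \<sigma> S s = measure (gauss_noise \<sigma>) {z. s + z \<notin> voronoi S s}"

definition avg_err :: "real \<Rightarrow> (real^'n) set \<Rightarrow> real^'n \<Rightarrow> ereal" where
  "avg_err \<sigma> S h =
     Limsup at_top (\<lambda>a::real. ereal ((\<Sum>s\<in>S \<inter> Hmap h ` Cb a. err_prob \<sigma> S s)
                                      / real (M_count S h a)))"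

definition regular_IC :: "(real^'n) set \<Rightarrow> bool" where
  "regular_IC T \<longleftrightarrow> (\<exists>r0>0. \<forall>s\<in>T. voronoi T s \<subseteq> ball s r0)"

definition regular_fading_pdf :: "(real \<Rightarrow> real) \<Rightarrow> bool" where
  "regular_fading_pdf f \<longleftrightarrow>
     f \<in> borel_measurable borel \<and> (\<forall>x. 0 \<le> f x) \<and> (\<forall>x\<le>0. f x = 0) \<and>
     (\<integral>\<^sup>+ x. ennreal (f x) \<partial>lborel) = 1 \<and>
     (\<exists>\<alpha>>0. \<exists>c>0. \<exists>\<delta>>0. \<forall>x. 0 < x \<and> x < \<delta> \<longrightarrow> f x = c * x powr (\<alpha> - 1))"

definition fading_law :: "(real \<Rightarrow> real) \<Rightarrow> ('n::finite \<Rightarrow> real) measure" where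
  "fading_law f = (\<Pi>\<^sub>M i\<in>(UNIV::'n set). density lborel (\<lambda>x. ennreal (f x)))"

definition hmin :: "real^'n \<Rightarrow> real" where
  "hmin h = Min (range (\<lambda>i. h $ i))"

definition is_hstar :: "(real \<Rightarrow> real) \<Rightarrow> ('n::finite) itself \<Rightarrow> real \<Rightarrow> real \<Rightarrow> bool" where
  "is_hstar f _ \<xi> t \<longleftrightarrow>
     measure (fading_law f :: ('n::finite \<Rightarrow> real) measure) {H. Min (range H) \<le> t} = \<xi>"

text \<open>h is a xi-strong fading realization (w.r.t. the threshold t = h*_min(xi))\<close>
definition xi_strong :: "real \<Rightarrow> real^'n \<Rightarrow> bool" where
  "xi_strong t h \<longleftrightarrow> hmin h \<le> t"

end

theory Submission
  imports Defs
begin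

(*
  If H is not xi-strong, every gain h_i exceeds h*_min(xi), which is nonnegative because the
  fading amplitudes are almost surely positive; so H is invertible and H S is again an IC.

  If P_e(H S) = 0, the density of H S is 0 as well and the empty constellation will do.
  Indeed, in a large window a positive density forces, by pigeonhole on a grid of mesh l,
  more than half of the points to have a neighbour within distance n l, and each of these is
  decoded wrongly with probability at least the Gaussian mass of a small cube, a constant.

  Otherwise add to H S all points of the grid D Z^n at distance at least D from H S.  Every
  point of R^n lies within n D / 2 of the grid, so all Voronoi cells are contained in balls of
  radius n D / 2 + D + 1 and the new IC is regular; its density can only grow; and since any new
  competitor of s is at distance at least D from s, the error probability of each point grows
  by at most the Gaussian tail Pr{|z| >= D/2}.  The averaged error therefore grows by at most
  that tail too, which is below xi P_e(H S) for large D.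
*)

lemma frequently_less_if_less_Limsup:
  fixes f :: "'a \<Rightarrow> 'b::complete_linorder"
  assumes "c < Limsup F f"
  shows "\<exists>\<^sub>F x in F. c < f x"
proof (rule ccontr)
  assume "\<not> (\<exists>\<^sub>F x in F. c < f x)"
  then have "Limsup F f \<le> c"
    by (intro Limsup_bounded) (simp add: not_frequently not_less)
  with assms show False
    by simp
qed

lemma Limsup_ge_if_frequently:
  fixes f :: "'a \<Rightarrow> 'b::complete_linorder"
  assumes "\<exists>\<^sub>F x in F. c \<le> f x"
  shows "c \<le> Limsup F f"
proof (rule ccontr)
  assume "\<not> c \<le> Limsup F f"
  then have "\<forall>\<^sub>F x in F. f x < c"
    by (intro Limsup_lessD) simp
  then have "\<forall>\<^sub>F x in F. \<not> c \<le> f x"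
    by (rule eventually_mono) simp
  with assms show False
    by (simp add: frequently_def)
qed

lemma half_le_average_if_few_exceptions:
  fixes g :: "'a \<Rightarrow> real"
  assumes "finite F" and "L \<subseteq> F" and "2 * card L < card F"
    and "\<And>x. x \<in> F \<Longrightarrow> 0 \<le> g x" and "\<And>x. x \<in> F - L \<Longrightarrow> \<kappa> \<le> g x" and "0 \<le> \<kappa>"
  shows "\<kappa> / 2 \<le> (\<Sum>x\<in>F. g x) / card F"
proof -
  have "card F - card L \<le> card (F - L)"
    using assms(1,2) by (intro diff_card_le_card_Diff) (rule finite_subset)
  then have "real (card F) / 2 \<le> real (card (F - L))"
    using assms(3) by linarith
  then have "\<kappa> * (real (card F) / 2) \<le> \<kappa> * real (card (F - L))"
    using assms(6) by (rule mult_left_mono)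
  also have "\<dots> \<le> (\<Sum>x\<in>F - L. g x)"
    using sum_mono[of "F - L" "\<lambda>_. \<kappa>" g] assms(5) by (simp add: mult.commute)
  also have "\<dots> \<le> (\<Sum>x\<in>F. g x)"
    using assms(1,4) by (intro sum_mono2) auto
  finally show ?thesis
    using assms(3) by (simp add: le_divide_eq mult.commute)
qed

lemma average_Un_le:
  fixes f g :: "'a \<Rightarrow> real"
  assumes "finite A" and "finite B" and "A \<inter> B = {}"
    and "\<And>x. x \<in> A \<Longrightarrow> g x \<le> f x + \<eta>" and "\<And>x. x \<in> B \<Longrightarrow> g x \<le> \<eta>"
    and "\<And>x. x \<in> A \<Longrightarrow> 0 \<le> f x" and "0 \<le> \<eta>"
  shows "(\<Sum>x\<in>A \<union> B. g x) / card (A \<union> B) \<le> (\<Sum>x\<in>A. f x) / card A + \<eta>"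
proof (cases "A \<union> B = {}")
  case True
  then show ?thesis
    using assms(7) by simp
next
  case False
  define E where "E = (\<Sum>x\<in>A. f x)"
  have "0 \<le> E"
    using assms(6) by (simp add: E_def sum_nonneg)
  have "0 < real (card (A \<union> B))"
    using False assms(1,2) by (simp add: card_gt_0_iff)
  have "(\<Sum>x\<in>A \<union> B. g x) = (\<Sum>x\<in>A. g x) + (\<Sum>x\<in>B. g x)"
    using assms(1-3) by (rule sum.union_disjoint)
  also have "\<dots> \<le> (E + card A * \<eta>) + card B * \<eta>"
    using sum_mono[of A g "\<lambda>x. f x + \<eta>"] sum_mono[of B g "\<lambda>_. \<eta>"] assms(4,5)
    by (simp add: E_def sum.distrib)
  also have "\<dots> = E + card (A \<union> B) * \<eta>"
    using assms(1-3) by (simp add: card_Un_disjoint algebra_simps)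
  finally have "(\<Sum>x\<in>A \<union> B. g x) / card (A \<union> B) \<le> E / card (A \<union> B) + \<eta>"
    using \<open>0 < real (card (A \<union> B))\<close> by (simp add: pos_divide_le_eq algebra_simps)
  also have "E / card (A \<union> B) \<le> E / card A"
  proof (cases "A = {}")
    case True
    then show ?thesis
      by (simp add: E_def)
  next
    case False
    then show ?thesis
      using \<open>0 \<le> E\<close> assms(1,2)
      by (intro divide_left_mono) (auto simp: card_gt_0_iff card_mono)
  qed
  finally show ?thesis
    by (simp add: E_def)
qed

lemma ereal_divide_le_self: "0 \<le> x \<Longrightarrow> \<xi> > 0 \<Longrightarrow> x / ereal (1 + \<xi>) \<le> (x :: ereal)"
  by (cases x) (auto simp: divide_le_eq algebra_simps)

lemma ereal_exists_add_le_mult: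
  assumes "0 < x" and "\<xi> > 0"
  shows "\<exists>e>0. x + ereal e \<le> x * ereal (1 + \<xi>)"
proof (cases x)
  case (real r)
  with assms show ?thesis
    by (intro exI[of _ "r * \<xi>"]) (simp add: algebra_simps)
next
  case PInf
  with assms show ?thesis
    by (intro exI[of _ 1]) simp
next
  case MInf
  with assms show ?thesis
    by simp
qed

lemma nn_integral_exp_square_finite:
  assumes "\<sigma> > 0"
  shows "(\<integral>\<^sup>+ x. ennreal (exp (- x\<^sup>2 / (2 * \<sigma>\<^sup>2))) \<partial>lborel) < \<infinity>"
proof -
  have density_scaled: "ennreal (exp (- x\<^sup>2 / (2 * \<sigma>\<^sup>2)))
      = ennreal (sqrt (2 * pi * \<sigma>\<^sup>2)) * ennreal (normal_density 0 \<sigma> x)" for x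
    using assms by (simp add: normal_density_def normal_density_nonneg flip: ennreal_mult)
  have "(\<integral>\<^sup>+ x. ennreal (normal_density 0 \<sigma> x) \<partial>lborel) = 1"
    using prob_space.emeasure_space_1[OF prob_space_normal_density[where \<mu>=0, OF assms]]
    by (simp add: emeasure_density)
  then show ?thesis
    by (simp only: density_scaled) (simp add: nn_integral_cmult)
qed

lemma finite_measure_gauss_noise:
  assumes "\<sigma> > 0"
  shows "finite_measure (gauss_noise \<sigma> :: (real^'n) measure)"
proof -
  let ?g = "\<lambda>x::real. ennreal (exp (- x\<^sup>2 / (2 * \<sigma>\<^sup>2)))"
  have exp_norm_eq_prod: "ennreal (exp (- (norm z)\<^sup>2 / (2 * \<sigma>\<^sup>2))) = (\<Prod>b\<in>Basis. ?g (z \<bullet> b))"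
    for z :: "real^'n"
  proof -
    have "(norm z)\<^sup>2 = (\<Sum>b\<in>Basis. (z \<bullet> b)\<^sup>2)"
      by (simp only: power2_norm_eq_inner euclidean_inner[of z z]) (simp add: power2_eq_square)
    then have "- (norm z)\<^sup>2 / (2 * \<sigma>\<^sup>2) = (\<Sum>b\<in>Basis. - (z \<bullet> b)\<^sup>2 / (2 * \<sigma>\<^sup>2))"
      by (simp add: sum_divide_distrib[symmetric] sum_negf)
    then show ?thesis by (simp add: exp_sum prod_ennreal)
  qed
  have "(\<integral>\<^sup>+ z. ennreal (exp (- (norm z)\<^sup>2 / (2 * \<sigma>\<^sup>2))) \<partial>(lborel :: (real^'n) measure))
      = (\<Prod>b\<in>(Basis :: (real^'n) set). \<integral>\<^sup>+ x. ?g x \<partial>lborel)"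
    unfolding exp_norm_eq_prod by (rule nn_integral_lborel_prod) auto
  also have "\<dots> < \<infinity>"
    using nn_integral_exp_square_finite[OF assms]
    by (simp add: less_top ennreal_prod_eq_top power_less_top_ennreal)
  finally have "(\<integral>\<^sup>+ z. ennreal ((2 * pi * \<sigma>\<^sup>2) powr (- real CARD('n) / 2))
      * ennreal (exp (- (norm z)\<^sup>2 / (2 * \<sigma>\<^sup>2))) \<partial>(lborel :: (real^'n) measure)) < \<infinity>"
    by (simp add: nn_integral_cmult ennreal_mult_less_top)
  then have "emeasure (gauss_noise \<sigma> :: (real^'n) measure) UNIV < \<infinity>"
    unfolding gauss_noise_def by (simp add: emeasure_density ennreal_mult'')
  then show ?thesis
    by (intro finite_measureI) (simp add: gauss_noise_def space_density)
qed

lemma sets_gauss_noise [simp, measurable_cong]: "sets (gauss_noise \<sigma>) = sets borel"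
  by (simp add: gauss_noise_def)

lemma gauss_noise_tail_le:
  assumes "\<sigma> > 0" and "e > 0"
  shows "\<exists>D>0. measure (gauss_noise \<sigma> :: (real^'n) measure) {z. D \<le> norm z} \<le> e"
proof -
  interpret finite_measure "gauss_noise \<sigma> :: (real^'n) measure"
    by (rule finite_measure_gauss_noise[OF assms(1)])
  define A where "A n = {z::real^'n. real (Suc n) \<le> norm z}" for n
  have "(\<Inter>n. A n) = {}"
  proof safe
    fix z assume "z \<in> (\<Inter>n. A n)"
    then have "real (Suc (nat \<lceil>norm z\<rceil>)) \<le> norm z" unfolding A_def by blast
    then show "z \<in> {}" by linarith
  qed
  moreover have "decseq A" and "\<And>n. A n \<in> sets (gauss_noise \<sigma>)"
    unfolding A_def by (auto simp: decseq_def)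
  ultimately have "(\<lambda>n. measure (gauss_noise \<sigma>) (A n)) \<longlonglongrightarrow> 0"
    using finite_Lim_measure_decseq[of A] by auto
  then obtain N where "measure (gauss_noise \<sigma>) (A N) < e"
    using assms(2) by (metis order_tendstoD(2) eventually_sequentially order_refl)
  then show ?thesis
    unfolding A_def by (intro exI[of _ "real (Suc N)"]) auto
qed

lemma emeasure_gauss_noise_ge:
  fixes A :: "(real^'n) set"
  assumes "\<sigma> > 0" and "A \<in> sets borel" and "\<And>z. z \<in> A \<Longrightarrow> norm z \<le> R"
  shows "ennreal ((2 * pi * \<sigma>\<^sup>2) powr (- real CARD('n) / 2) * exp (- R\<^sup>2 / (2 * \<sigma>\<^sup>2)))
           * emeasure lborel A \<le> emeasure (gauss_noise \<sigma>) A"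
proof -
  let ?c = "(2 * pi * \<sigma>\<^sup>2) powr (- real CARD('n) / 2)"
  have "exp (- R\<^sup>2 / (2 * \<sigma>\<^sup>2)) \<le> exp (- (norm z)\<^sup>2 / (2 * \<sigma>\<^sup>2))" if "z \<in> A" for z
  proof -
    have "(norm z)\<^sup>2 \<le> R\<^sup>2"
      using assms(3)[OF that] by (intro power_mono) auto
    then show ?thesis
      using assms(1) by (simp add: divide_right_mono)
  qed
  then have "?c * exp (- R\<^sup>2 / (2 * \<sigma>\<^sup>2)) \<le> ?c * exp (- (norm z)\<^sup>2 / (2 * \<sigma>\<^sup>2))"
    if "z \<in> A" for z
    using that by (intro mult_left_mono) auto
  then have "(\<integral>\<^sup>+ z. ennreal (?c * exp (- R\<^sup>2 / (2 * \<sigma>\<^sup>2))) * indicator A z \<partial>lborel)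
      \<le> (\<integral>\<^sup>+ z. ennreal (?c * exp (- (norm z)\<^sup>2 / (2 * \<sigma>\<^sup>2))) * indicator A z \<partial>lborel)"
    by (intro nn_integral_mono) (auto simp: indicator_def intro!: ennreal_leI)
  then show ?thesis
    using assms(2) by (simp add: nn_integral_cmult_indicator gauss_noise_def emeasure_density)
qed

lemma norm_le_of_components_le: "(\<And>i. \<bar>x $ i\<bar> \<le> r) \<Longrightarrow> norm (x::real^'n) \<le> real CARD('n) * r"
  using norm_le_l1_cart[of x] sum_mono[of UNIV "\<lambda>i. \<bar>x $ i\<bar>" "\<lambda>_. r"] by simp

lemma Hmap_nth [simp]: "Hmap h x $ i = h $ i * x $ i"
  by (simp add: Hmap_def)

lemma linear_Hmap: "linear (Hmap h)"
  by (intro linearI) (auto simp: vec_eq_iff algebra_simps)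

lemma Hmap_inverse: "(\<And>i. h $ i \<noteq> 0) \<Longrightarrow> Hmap h (Hmap (\<chi> i. 1 / h $ i) y) = y"
  by (simp add: vec_eq_iff)

lemma bounded_Hmap_image: "bounded B \<Longrightarrow> bounded (Hmap h ` B)"
  using bounded_linear_image linear_Hmap linear_conv_bounded_linear by blast

lemma bounded_Cb: "bounded (Cb a :: (real^'n) set)"
proof -
  have "- (\<bar>a\<bar>/2) \<le> x $ i \<and> x $ i \<le> \<bar>a\<bar>/2" if "x \<in> Cb a" for x :: "real^'n" and i
  proof -
    have "\<bar>x $ i\<bar> < a / 2" using that by (simp add: Cb_def)
    then show ?thesis by arith
  qed
  then have "Cb a \<subseteq> cbox ((\<chi> i. - \<bar>a\<bar>/2)::real^'n) (\<chi> i. \<bar>a\<bar>/2)"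
    by (auto simp: mem_box_cart)
  then show ?thesis
    using bounded_cbox bounded_subset by blast
qed

lemma Hmap_Cb_eq_box:
  fixes h :: "real^'n"
  assumes "\<And>i. h $ i > 0"
  shows "Hmap h ` Cb a = box (- (\<chi> i. h $ i * a / 2)) (\<chi> i. h $ i * a / 2)"
proof safe
  fix x :: "real^'n" assume x: "x \<in> Cb a"
  have "\<bar>h $ i * x $ i\<bar> < h $ i * a / 2" for i
    using x assms[of i] by (simp add: Cb_def abs_mult)
  then have "- (h $ i * a / 2) < h $ i * x $ i \<and> h $ i * x $ i < h $ i * a / 2" for i
    by (metis abs_less_iff minus_less_iff)
  then show "Hmap h x \<in> box (- (\<chi> i. h $ i * a / 2)) (\<chi> i. h $ i * a / 2)"
    by (simp add: mem_box_cart abs_less_iff)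
next
  fix y :: "real^'n" assume y: "y \<in> box (- (\<chi> i. h $ i * a / 2)) (\<chi> i. h $ i * a / 2)"
  have "\<bar>y $ i / h $ i\<bar> < a / 2" for i
  proof -
    have "- (h $ i * a / 2) < y $ i \<and> y $ i < h $ i * a / 2"
      using y by (simp add: mem_box_cart)
    then have "\<bar>y $ i\<bar> < h $ i * a / 2"
      by arith
    then show ?thesis
      using assms[of i] by (simp add: pos_divide_less_eq mult.commute)
  qed
  then have "Hmap (\<chi> i. 1 / h $ i) y \<in> Cb a"
    by (simp add: Cb_def)
  moreover have "Hmap h (Hmap (\<chi> i. 1 / h $ i) y) = y"
    using assms by (intro Hmap_inverse) (metis less_irrefl)
  ultimately show "y \<in> Hmap h ` Cb a"
    by (metis image_eqI)
qed

lemma measure_Hmap_Cb: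
  fixes h :: "real^'n"
  assumes "\<And>i. h $ i > 0" and "a > 0"
  shows "measure lborel (Hmap h ` Cb a) = (\<Prod>i\<in>UNIV. h $ i) * a ^ CARD('n)"
proof -
  have "0 \<le> h $ i * a" for i
    using assms by (simp add: less_imp_le)
  then have corner: "- (\<chi> i. h $ i * a / 2) \<in> cbox (- (\<chi> i. h $ i * a / 2)) (\<chi> i. h $ i * a / 2 :: real^'n)"
    by (simp add: mem_box_cart)
  have "measure lborel (Hmap h ` Cb a)
      = measure lborel (cbox (- (\<chi> i. h $ i * a / 2)) (\<chi> i. h $ i * a / 2 :: real^'n))"
    unfolding Hmap_Cb_eq_box[OF assms(1)]
    by (simp only: measure_lborel_box_eq measure_lborel_cbox_eq)
  also have "\<dots> = (\<Prod>i\<in>UNIV. h $ i * a)"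
    by (subst content_cbox_cart) (use corner in \<open>auto simp: mult.commute\<close>)
  finally have "measure lborel (Hmap h ` Cb a) = (\<Prod>i\<in>UNIV. h $ i * a)" .
  then show ?thesis
    by (simp add: prod.distrib)
qed

lemma IC_Hmap_image:
  fixes h :: "real^'n"
  assumes "IC S" and "\<And>i. h $ i \<noteq> 0"
  shows "IC (Hmap h ` S)"
  unfolding IC_def
proof safe
  show "countable (Hmap h ` S)"
    using assms(1) by (simp add: IC_def)
next
  fix B :: "(real^'n) set" assume "bounded B"
  let ?g = "Hmap (\<chi> i. 1 / h $ i)"
  have "finite (S \<inter> ?g ` B)"
    using assms(1) bounded_Hmap_image[OF \<open>bounded B\<close>] by (simp add: IC_def)
  moreover have "Hmap h ` S \<inter> B \<subseteq> Hmap h ` (S \<inter> ?g ` B)"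
  proof
    fix y assume "y \<in> Hmap h ` S \<inter> B"
    then obtain x where "x \<in> S" "y = Hmap h x" "y \<in> B" by auto
    moreover from \<open>y = Hmap h x\<close> have "?g y = x"
      using assms(2) by (simp add: vec_eq_iff)
    ultimately show "y \<in> Hmap h ` (S \<inter> ?g ` B)" by (metis IntI image_eqI)
  qed
  ultimately show "finite (Hmap h ` S \<inter> B)"
    by (meson finite_imageI finite_subset)
qed

lemma IC_empty: "IC {}"
  by (simp add: IC_def)

lemma regular_IC_empty: "regular_IC {}"
  by (auto simp: regular_IC_def intro: exI[of _ 1])

lemma density_rc_nonneg: "0 \<le> density_rc S h"
  unfolding density_rc_def by (intro le_Limsup always_eventually) (auto simp: zero_ereal_def)

lemma avg_err_nonneg: "0 \<le> avg_err \<sigma> S h"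
  unfolding avg_err_def
  by (intro le_Limsup always_eventually allI)
    (auto simp: zero_ereal_def err_prob_def intro!: divide_nonneg_nonneg sum_nonneg)

lemma density_rc_empty: "density_rc {} h = 0"
  unfolding density_rc_def M_count_def by (simp add: Limsup_const zero_ereal_def[symmetric])

lemma avg_err_empty: "avg_err \<sigma> {} h = 0"
  unfolding avg_err_def M_count_def by (simp add: Limsup_const zero_ereal_def[symmetric])

lemma density_rc_mono:
  assumes "S \<subseteq> T" and "IC T"
  shows "density_rc S h \<le> density_rc T h"
  unfolding density_rc_def
proof (intro Limsup_mono always_eventually allI)
  fix a
  have "finite (T \<inter> Hmap h ` Cb a)"
    using assms(2) bounded_Hmap_image[OF bounded_Cb] unfolding IC_def by blast
  then have "M_count S h a \<le> M_count T h a"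
    unfolding M_count_def using assms(1) by (intro card_mono) auto
  then show "ereal (real (M_count S h a) / measure lborel (Hmap h ` Cb a))
      \<le> ereal (real (M_count T h a) / measure lborel (Hmap h ` Cb a))"
    by (simp add: divide_right_mono)
qed

section \<open>Error probability of a point with a close neighbour\<close>

lemma closed_voronoi: "closed (voronoi S s)"
proof -
  have "voronoi S s = (\<Inter>t\<in>S. {x. dist x s \<le> dist x t})"
    by (auto simp: voronoi_def)
  then show ?thesis
    by (auto intro!: closed_INT closed_Collect_le continuous_intros)
qed

lemma error_region_borel: "{z. s + z \<notin> voronoi S s} \<in> sets borel"
proof -
  have "closed ((\<lambda>z. s + z) -` voronoi S s)"
    using closed_voronoi by (intro continuous_closed_vimage) (auto intro: continuous_intros)
  then have "open (- ((\<lambda>z. s + z) -` voronoi S s))"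
    by (simp add: open_Compl)
  moreover have "{z. s + z \<notin> voronoi S s} = - ((\<lambda>z. s + z) -` voronoi S s)"
    by auto
  ultimately show ?thesis
    by simp
qed

lemma not_in_voronoi_if_closer:
  fixes s t z :: "real^'n"
  assumes "t \<in> S" and "(norm (t - s))\<^sup>2 < 2 * (z \<bullet> (t - s))"
  shows "s + z \<notin> voronoi S s"
proof -
  have "(norm (z - (t - s)))\<^sup>2 = (norm z)\<^sup>2 - 2 * (z \<bullet> (t - s)) + (norm (t - s))\<^sup>2"
    by (simp add: power2_norm_eq_inner inner_diff_left inner_diff_right inner_commute)
  with assms(2) have "(norm (z - (t - s)))\<^sup>2 < (norm z)\<^sup>2"
    by linarith
  then have "norm (z - (t - s)) < norm z"
    by (simp add: power2_less_imp_less)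
  then have "\<not> dist (s + z) s \<le> dist (s + z) t"
    by (simp add: dist_norm algebra_simps)
  with assms(1) show ?thesis
    by (auto simp: voronoi_def)
qed

text \<open>A point with a neighbour at distance at most \<open>d\<close> is decoded wrongly at least when the
  noise falls into a cube of side \<open>d / (2n)\<close> centred at distance \<open>d\<close> in the direction of the
  neighbour; \<open>neighbour_error_bound\<close> bounds the Gaussian mass of that cube from below.\<close>

definition neighbour_error_bound :: "real \<Rightarrow> real \<Rightarrow> 'n::finite itself \<Rightarrow> real" where
  "neighbour_error_bound \<sigma> d _ = (2 * pi * \<sigma>\<^sup>2) powr (- real CARD('n) / 2)
      * exp (- (2 * d)\<^sup>2 / (2 * \<sigma>\<^sup>2)) * (d / (2 * real CARD('n))) ^ CARD('n)"

lemma neighbour_error_bound_pos: "d > 0 \<Longrightarrow> \<sigma> > 0 \<Longrightarrow> neighbour_error_bound \<sigma> d TYPE('n::finite) > 0"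
  by (simp add: neighbour_error_bound_def)

lemma ball_subset_error_region:
  fixes S :: "(real^'n) set"
  assumes "t \<in> S" and "t \<noteq> s" and "dist s t \<le> d"
  shows "cball ((d / norm (t - s)) *\<^sub>R (t - s)) (d / 4) \<subseteq> {z. s + z \<notin> voronoi S s}"
proof
  fix z assume z: "z \<in> cball ((d / norm (t - s)) *\<^sub>R (t - s)) (d / 4)"
  define v where "v = t - s"
  define w where "w = (d / norm v) *\<^sub>R v"
  have v: "0 < norm v" "norm v \<le> d"
    using assms(2,3) by (simp_all add: v_def dist_norm norm_minus_commute)
  have "w \<bullet> v = d * norm v"
    using v by (simp add: w_def dot_square_norm power2_eq_square)
  moreover have "norm (z - w) \<le> d / 4"
    using z by (simp add: w_def v_def dist_norm norm_minus_commute)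
  then have "\<bar>(z - w) \<bullet> v\<bar> \<le> d / 4 * norm v"
    using Cauchy_Schwarz_ineq2[of "z - w" v] by (meson mult_right_mono norm_ge_zero order_trans)
  then have "- (d / 4 * norm v) \<le> z \<bullet> v - w \<bullet> v"
    by (simp only: abs_le_iff inner_diff_left) linarith
  ultimately have "3 / 4 * d * norm v \<le> z \<bullet> v"
    by linarith
  moreover have "norm v * norm v \<le> d * norm v"
    using v by (simp add: mult_right_mono)
  moreover have "0 < d * norm v"
    using v by (intro mult_pos_pos) linarith+
  ultimately have "(norm v)\<^sup>2 < 2 * (z \<bullet> v)"
    unfolding power2_eq_square by linarith
  then show "z \<in> {z. s + z \<notin> voronoi S s}"
    using not_in_voronoi_if_closer[OF assms(1)] by (simp add: v_def)
qed

lemma err_prob_ge_neighbour_error_bound: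
  fixes S :: "(real^'n) set"
  assumes "\<sigma> > 0" and "t \<in> S" and "t \<noteq> s" and "dist s t \<le> d" and "d > 0"
  shows "neighbour_error_bound \<sigma> d TYPE('n) \<le> err_prob \<sigma> S s"
proof -
  interpret finite_measure "gauss_noise \<sigma> :: (real^'n) measure"
    by (rule finite_measure_gauss_noise[OF assms(1)])
  define w where "w = (d / norm (t - s)) *\<^sub>R (t - s)"
  define r where "r = d / (4 * real CARD('n))"
  define C where "C = cbox (w - (\<chi> i. r)) (w + (\<chi> i. r))"
  have "r > 0"
    using assms(5) by (simp add: r_def)
  have near_w: "norm (z - w) \<le> d / 4" if "z \<in> C" for z
  proof -
    have "\<bar>(z - w) $ i\<bar> \<le> r" for i
    proof -
      have "w $ i - r \<le> z $ i \<and> z $ i \<le> w $ i + r"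
        using that by (simp add: C_def mem_box_cart)
      then show ?thesis
        by (simp add: abs_le_iff)
    qed
    then show ?thesis
      using norm_le_of_components_le[of "z - w" r] by (simp add: r_def)
  qed
  have C_errs: "C \<subseteq> {z. s + z \<notin> voronoi S s}"
    using near_w ball_subset_error_region[OF assms(2-4)]
    by (force simp: w_def dist_norm norm_minus_commute)
  have "ennreal ((2 * pi * \<sigma>\<^sup>2) powr (- real CARD('n) / 2) * exp (- (2 * d)\<^sup>2 / (2 * \<sigma>\<^sup>2)))
      * emeasure lborel C \<le> emeasure (gauss_noise \<sigma>) C"
  proof (rule emeasure_gauss_noise_ge[OF assms(1)])
    show "C \<in> sets borel"
      by (simp add: C_def)
    fix z assume "z \<in> C"
    have "norm z \<le> norm w + norm (z - w)"
      using norm_triangle_ineq[of w "z - w"] by simp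
    moreover have "norm w = d"
      using assms(3,5) by (simp add: w_def)
    ultimately show "norm z \<le> 2 * d"
      using near_w[OF \<open>z \<in> C\<close>] assms(5) by linarith
  qed
  moreover have "emeasure lborel C = ennreal ((d / (2 * real CARD('n))) ^ CARD('n))"
  proof -
    have "emeasure lborel C = (\<Prod>b\<in>(Basis::(real^'n) set). ((w + (\<chi> i. r)) - (w - (\<chi> i. r))) \<bullet> b)"
      unfolding C_def using \<open>r > 0\<close>
      by (intro emeasure_lborel_cbox) (auto simp: Basis_vec_def inner_axis inner_diff_left inner_add_left)
    also have "\<dots> = (\<Prod>b\<in>(Basis::(real^'n) set). 2 * r)"
      by (intro arg_cong[where f=ennreal] prod.cong refl)
        (auto simp: Basis_vec_def cart_eq_inner_axis[symmetric])
    also have "\<dots> = ennreal ((d / (2 * real CARD('n))) ^ CARD('n))"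
      using \<open>r > 0\<close> by (simp add: r_def)
    finally show ?thesis .
  qed
  ultimately have "ennreal (neighbour_error_bound \<sigma> d TYPE('n)) \<le> emeasure (gauss_noise \<sigma>) C"
    using assms(1,5) by (simp add: neighbour_error_bound_def ennreal_mult'' mult.assoc)
  also have "\<dots> \<le> emeasure (gauss_noise \<sigma>) {z. s + z \<notin> voronoi S s}"
    using C_errs error_region_borel by (intro emeasure_mono) auto
  finally show ?thesis
    unfolding err_prob_def using error_region_borel by (simp add: emeasure_eq_measure)
qed

section \<open>Zero error probability forces zero density\<close>

lemma dist_le_if_same_grid_cell:
  fixes s t :: "real^'n"
  assumes "ell > 0" and "\<And>i. \<lfloor>s $ i / ell\<rfloor> = \<lfloor>t $ i / ell\<rfloor>"
  shows "dist s t \<le> real CARD('n) * ell"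
proof -
  have "\<bar>(s - t) $ i\<bar> \<le> ell" for i
  proof -
    have "real_of_int \<lfloor>s $ i / ell\<rfloor> = real_of_int \<lfloor>t $ i / ell\<rfloor>"
      using assms(2) by simp
    then have "\<bar>s $ i / ell - t $ i / ell\<bar> < 1"
      using floor_correct[of "s $ i / ell"] floor_correct[of "t $ i / ell"]
      unfolding abs_less_iff by linarith
    then have "\<bar>s $ i - t $ i\<bar> / ell < 1"
      using assms(1) by (simp add: abs_divide flip: diff_divide_distrib)
    then show ?thesis
      using assms(1) by (simp add: divide_less_eq)
  qed
  then show ?thesis
    using norm_le_of_components_le[of "s - t" ell] by (simp add: dist_norm)
qed

lemma floor_divide_mem_range:
  fixes x b ell :: real
  assumes "ell > 0" and "\<bar>x\<bar> < b"
  shows "\<lfloor>x / ell\<rfloor> \<in> {- \<lceil>b / ell\<rceil> .. \<lceil>b / ell\<rceil>}"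
proof -
  have "- b < x" and "x < b"
    using assms(2) by arith+
  then have "- b / ell < x / ell" and "x / ell < b / ell"
    using divide_strict_right_mono assms(1) by blast+
  moreover have "b / ell \<le> of_int \<lceil>b / ell\<rceil>"
    by (rule le_of_int_ceiling)
  ultimately have "- of_int \<lceil>b / ell\<rceil> \<le> x / ell" and "x / ell < of_int \<lceil>b / ell\<rceil> + 1"
    by linarith+
  then show ?thesis
    by (simp add: le_floor_iff floor_le_iff)
qed

text \<open>Pigeonhole: distinct points of a well separated set lie in distinct cells of the grid
  of mesh \<open>ell\<close>.\<close>

lemma card_separated_in_box_le:
  fixes A :: "(real^'n) set" and b :: "real^'n"
  assumes "ell > 0" and "\<And>i. 0 \<le> b $ i"
    and "\<And>s i. s \<in> A \<Longrightarrow> \<bar>s $ i\<bar> < b $ i"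
    and "\<And>s t. s \<in> A \<Longrightarrow> t \<in> A \<Longrightarrow> s \<noteq> t \<Longrightarrow> real CARD('n) * ell < dist s t"
  shows "real (card A) \<le> (\<Prod>i\<in>UNIV. 2 * b $ i / ell + 3)"
proof -
  define N where "N i = \<lceil>b $ i / ell\<rceil>" for i
  define cell where "cell s = (\<lambda>i. \<lfloor>s $ i / ell\<rfloor>)" for s :: "real^'n"
  have inj: "inj_on cell A"
  proof (rule inj_onI, rule ccontr)
    fix s t assume "s \<in> A" "t \<in> A" "cell s = cell t" "s \<noteq> t"
    then have "dist s t \<le> real CARD('n) * ell"
      by (intro dist_le_if_same_grid_cell[OF assms(1)]) (simp add: cell_def fun_eq_iff)
    then show False
      using assms(4)[OF \<open>s \<in> A\<close> \<open>t \<in> A\<close> \<open>s \<noteq> t\<close>] by linarith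
  qed
  have cells: "cell ` A \<subseteq> PiE UNIV (\<lambda>i. {- N i .. N i})"
    using floor_divide_mem_range[OF assms(1) assms(3)] by (auto simp: cell_def N_def)
  have "card A = card (cell ` A)"
    using inj by (simp add: card_image)
  also have "\<dots> \<le> card (PiE UNIV (\<lambda>i. {- N i .. N i}))"
    using cells by (intro card_mono) (simp_all add: finite_PiE)
  finally have "real (card A) \<le> (\<Prod>i\<in>UNIV. real (nat (2 * N i + 1)))"
    by (simp add: card_PiE flip: of_nat_prod)
  also have "\<dots> \<le> (\<Prod>i\<in>UNIV. 2 * b $ i / ell + 3)"
  proof (rule prod_mono)
    fix i
    have "0 \<le> b $ i / ell" and "real_of_int (N i) - 1 < b $ i / ell"
      using assms(1) assms(2)[of i] ceiling_correct[of "b $ i / ell"] by (simp_all add: N_def)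
    moreover have "0 \<le> N i"
      using \<open>0 \<le> b $ i / ell\<close> by (simp add: N_def)
    ultimately show "0 \<le> real (nat (2 * N i + 1)) \<and> real (nat (2 * N i + 1)) \<le> 2 * b $ i / ell + 3"
      by simp
  qed
  finally show ?thesis .
qed

lemma card_isolated_in_window_le:
  fixes F :: "(real^'n) set" and h :: "real^'n"
  assumes "ell > 0" and "\<And>i. h $ i > 0" and "\<And>i. 3 * ell / h $ i \<le> a"
    and "F \<subseteq> Hmap h ` Cb a"
  shows "real (card {s\<in>F. \<forall>t\<in>F. t \<noteq> s \<longrightarrow> real CARD('n) * ell < dist s t})
           \<le> (2 / ell) ^ CARD('n) * measure lborel (Hmap h ` Cb a)"
proof -
  have h_a: "3 * ell \<le> h $ i * a" for i
    using assms(2,3)[of i] by (simp add: divide_le_eq mult.commute)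
  then have "a > 0"
    using assms(1,2) by (metis mult_pos_pos mult_less_cancel_left_pos mult_zero_right
        order_less_le_trans zero_less_numeral)
  have "\<bar>s $ i\<bar> < h $ i * a / 2" if "s \<in> F" for s i
  proof -
    have "- (h $ i * a / 2) < s $ i \<and> s $ i < h $ i * a / 2"
      using that assms(4) Hmap_Cb_eq_box[OF assms(2)] by (auto simp: mem_box_cart)
    then show ?thesis
      by arith
  qed
  then have "real (card {s\<in>F. \<forall>t\<in>F. t \<noteq> s \<longrightarrow> real CARD('n) * ell < dist s t})
      \<le> (\<Prod>i\<in>UNIV. 2 * (\<chi> i. h $ i * a / 2) $ i / ell + 3)"
    using assms(1,2) \<open>a > 0\<close> by (intro card_separated_in_box_le) (auto simp: less_imp_le)
  also have "\<dots> \<le> (\<Prod>i\<in>UNIV. 2 / ell * (h $ i * a))"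
  proof (rule prod_mono)
    fix i
    show "0 \<le> 2 * (\<chi> i. h $ i * a / 2) $ i / ell + 3
        \<and> 2 * (\<chi> i. h $ i * a / 2) $ i / ell + 3 \<le> 2 / ell * (h $ i * a)"
      using h_a[of i] assms(1) by (simp add: field_simps)
  qed
  also have "\<dots> = (2 / ell) ^ CARD('n) * measure lborel (Hmap h ` Cb a)"
    unfolding measure_Hmap_Cb[OF assms(2) \<open>a > 0\<close>] by (simp only: prod.distrib prod_constant)
  finally show ?thesis .
qed

lemma average_error_ge_if_dense:
  fixes S :: "(real^'n) set" and h :: "real^'n"
  assumes "\<sigma> > 0" and "IC S" and "\<And>i. h $ i > 0"
    and "ell > 0" and "(2 / ell) ^ CARD('n) \<le> c / 2"
    and "\<And>i. 3 * ell / h $ i \<le> a"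
    and "c < real (M_count S h a) / measure lborel (Hmap h ` Cb a)"
  shows "neighbour_error_bound \<sigma> (real CARD('n) * ell) TYPE('n) / 2
           \<le> (\<Sum>s\<in>S \<inter> Hmap h ` Cb a. err_prob \<sigma> S s) / real (M_count S h a)"
proof -
  define F where "F = S \<inter> Hmap h ` Cb a"
  define L where "L = {s\<in>F. \<forall>t\<in>F. t \<noteq> s \<longrightarrow> real CARD('n) * ell < dist s t}"
  define vol where "vol = measure lborel (Hmap h ` Cb a)"
  have "finite F"
    using assms(2) bounded_Hmap_image[OF bounded_Cb] unfolding F_def IC_def by blast
  have "real (card L) \<le> c / 2 * vol"
  proof -
    have "real (card L) \<le> (2 / ell) ^ CARD('n) * vol"
      unfolding L_def vol_def using assms(3,4,6)
      by (intro card_isolated_in_window_le) (auto simp: F_def)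
    also have "\<dots> \<le> c / 2 * vol"
      using assms(5) by (intro mult_right_mono) (auto simp: vol_def)
    finally show ?thesis .
  qed
  moreover have "c * vol < real (card F)"
  proof -
    have "0 < 3 * ell / h $ i" for i
      using assms(3,4) by simp
    then have "a > 0"
      using assms(6) by (meson less_le_trans)
    then have "vol > 0"
      using measure_Hmap_Cb[OF assms(3)] assms(3) by (simp add: vol_def prod_pos)
    then show ?thesis
      using assms(7) by (simp add: F_def vol_def M_count_def pos_less_divide_eq)
  qed
  ultimately have "2 * card L < card F"
    by linarith
  moreover have "neighbour_error_bound \<sigma> (real CARD('n) * ell) TYPE('n) \<le> err_prob \<sigma> S s"
    if "s \<in> F - L" for s
  proof -
    from that obtain t where "t \<in> S" "t \<noteq> s" "dist s t \<le> real CARD('n) * ell"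
      by (auto simp: L_def F_def dist_commute not_less)
    then show ?thesis
      using assms(1,4) by (intro err_prob_ge_neighbour_error_bound) auto
  qed
  ultimately show ?thesis
    using \<open>finite F\<close> assms(1,4) unfolding M_count_def F_def[symmetric]
    by (intro half_le_average_if_few_exceptions[where L = L])
      (auto simp: L_def err_prob_def less_imp_le neighbour_error_bound_pos)
qed

lemma avg_err_pos_if_density_rc_pos:
  fixes S :: "(real^'n) set" and h :: "real^'n"
  assumes "\<sigma> > 0" and "IC S" and "\<And>i. h $ i > 0" and "0 < density_rc S h"
  shows "0 < avg_err \<sigma> S h"
proof -
  obtain c where "0 < ereal c" and "ereal c < density_rc S h"
    using assms(4) ereal_dense2 by blast
  then have "c > 0"
    by simp
  define ell where "ell = 2 + 4 / c"
  have "ell > 0" and "(2 / ell) ^ CARD('n) \<le> c / 2"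
  proof -
    show "ell > 0"
      using \<open>c > 0\<close> by (simp add: ell_def add_pos_pos)
    have "2 / ell \<le> 1" and "2 / ell \<le> c / 2"
      using \<open>c > 0\<close> by (simp_all add: ell_def field_simps)
    then have "(2 / ell) ^ CARD('n) \<le> (2 / ell) ^ 1"
      using \<open>ell > 0\<close> by (intro power_decreasing) auto
    with \<open>2 / ell \<le> c / 2\<close> show "(2 / ell) ^ CARD('n) \<le> c / 2"
      by simp
  qed
  let ?\<kappa> = "neighbour_error_bound \<sigma> (real CARD('n) * ell) TYPE('n)"
  have "\<exists>\<^sub>F a in at_top. c < real (M_count S h a) / measure lborel (Hmap h ` Cb a)"
    using frequently_less_if_less_Limsup[OF \<open>ereal c < density_rc S h\<close>[unfolded density_rc_def]]
    by simp
  moreover have "\<forall>\<^sub>F a in at_top. \<forall>i. 3 * ell / h $ i \<le> a"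
    by (intro eventually_all_finite eventually_ge_at_top)
  ultimately have "\<exists>\<^sub>F a in at_top. ereal (?\<kappa> / 2)
      \<le> ereal ((\<Sum>s\<in>S \<inter> Hmap h ` Cb a. err_prob \<sigma> S s) / real (M_count S h a))"
    using average_error_ge_if_dense[OF assms(1-3) \<open>ell > 0\<close> \<open>(2 / ell) ^ CARD('n) \<le> c / 2\<close>]
    by (auto elim: frequently_eventually_frequently[THEN frequently_elim1])
  then have "ereal (?\<kappa> / 2) \<le> avg_err \<sigma> S h"
    unfolding avg_err_def by (rule Limsup_ge_if_frequently)
  moreover have "0 < ?\<kappa>"
    using assms(1) \<open>ell > 0\<close> by (intro neighbour_error_bound_pos) auto
  ultimately show ?thesis
    using less_le_trans[of 0 "ereal (?\<kappa> / 2)"] by simp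
qed

section \<open>Padding with grid points\<close>

definition grid :: "real \<Rightarrow> (real^'n) set" where
  "grid D = range (\<lambda>k::'n \<Rightarrow> int. \<chi> i. D * of_int (k i))"

lemma countable_grid: "countable (grid D)"
  by (simp add: grid_def)

lemma finite_grid_Int_bounded:
  assumes "D > 0" and "bounded B"
  shows "finite (grid D \<inter> (B :: (real^'n) set))"
proof -
  obtain R where R: "\<And>x. x \<in> B \<Longrightarrow> norm x \<le> R"
    using assms(2) by (auto simp: bounded_iff)
  define N where "N = \<lceil>R / D\<rceil>"
  have "grid D \<inter> B \<subseteq> (\<lambda>k. \<chi> i. D * of_int (k i)) ` PiE UNIV (\<lambda>_. {- N .. N})"
  proof
    fix x assume "x \<in> grid D \<inter> B"
    then obtain k where x: "x = (\<chi> i. D * of_int (k i))" and "x \<in> B"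
      by (auto simp: grid_def)
    have "k i \<in> {- N .. N}" for i
    proof -
      have "D * \<bar>of_int (k i)\<bar> \<le> R"
        using component_le_norm_cart[of x i] R[OF \<open>x \<in> B\<close>] assms(1) by (simp add: x abs_mult)
      then have "\<bar>of_int (k i)\<bar> \<le> R / D"
        using assms(1) by (simp add: le_divide_eq mult.commute)
      then have "\<bar>real_of_int (k i)\<bar> \<le> of_int N"
        using le_of_int_ceiling[of "R / D"] unfolding N_def by linarith
      then show ?thesis
        by (simp add: abs_le_iff flip: of_int_abs)
    qed
    then show "x \<in> (\<lambda>k. \<chi> i. D * of_int (k i)) ` PiE UNIV (\<lambda>_. {- N .. N})"
      using x by blast
  qed
  then show ?thesis
    by (rule finite_subset) (simp add: finite_PiE)
qed

lemma grid_covering_radius: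
  fixes x :: "real^'n"
  assumes "D > 0"
  shows "\<exists>p\<in>grid D. dist x p \<le> real CARD('n) * (D / 2)"
proof -
  define k where "k i = \<lfloor>x $ i / D + 1 / 2\<rfloor>" for i
  have "\<bar>(x - (\<chi> i. D * of_int (k i))) $ i\<bar> \<le> D / 2" for i
  proof -
    have "\<bar>x $ i / D - of_int (k i)\<bar> \<le> 1 / 2"
      using floor_correct[of "x $ i / D + 1 / 2"] unfolding k_def abs_le_iff by linarith
    moreover have "x $ i - D * of_int (k i) = D * (x $ i / D - of_int (k i))"
      using assms by (simp add: right_diff_distrib)
    ultimately show ?thesis
      using assms by (simp add: abs_mult)
  qed
  then have "dist x (\<chi> i. D * of_int (k i)) \<le> real CARD('n) * (D / 2)"
    unfolding dist_norm by (rule norm_le_of_components_le)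
  then show ?thesis
    by (auto simp: grid_def)
qed

lemma grid_separated:
  assumes "D > 0" and "p \<in> grid D" and "q \<in> grid D" and "p \<noteq> (q :: real^'n)"
  shows "D \<le> dist p q"
proof -
  obtain k k' where p: "p = (\<chi> i. D * of_int (k i))" and q: "q = (\<chi> i. D * of_int (k' i))"
    using assms(2,3) by (auto simp: grid_def)
  have "\<exists>i. k i \<noteq> k' i"
  proof (rule ccontr)
    assume "\<nexists>i. k i \<noteq> k' i"
    then have "p = q"
      by (simp add: p q)
    with assms(4) show False ..
  qed
  then obtain i where "k i \<noteq> k' i" ..
  then have "1 \<le> \<bar>real_of_int (k i - k' i)\<bar>"
    by (simp flip: of_int_abs)
  then have "D \<le> \<bar>D * real_of_int (k i - k' i)\<bar>"
    using assms(1) by (simp add: abs_mult)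
  also have "\<dots> = \<bar>(p - q) $ i\<bar>"
    by (simp add: p q right_diff_distrib)
  also have "\<dots> \<le> dist p q"
    unfolding dist_norm by (rule component_le_norm_cart)
  finally show ?thesis .
qed

definition grid_padding :: "real \<Rightarrow> (real^'n) set \<Rightarrow> (real^'n) set" where
  "grid_padding D S = {p \<in> grid D. \<forall>s\<in>S. D \<le> dist p s}"

lemma IC_Un_grid_padding:
  fixes S :: "(real^'n) set"
  assumes "IC S" and "D > 0"
  shows "IC (S \<union> grid_padding D S)"
  unfolding IC_def
proof safe
  have "grid_padding D S \<subseteq> grid D"
    by (auto simp: grid_padding_def)
  then show "countable (S \<union> grid_padding D S)"
    using assms(1) countable_subset[OF _ countable_grid] by (auto simp: IC_def)
next
  fix B :: "(real^'n) set" assume "bounded B"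
  then have "finite (S \<inter> B)" and "finite (grid D \<inter> B)"
    using assms finite_grid_Int_bounded by (auto simp: IC_def)
  moreover have "(S \<union> grid_padding D S) \<inter> B \<subseteq> (S \<inter> B) \<union> (grid D \<inter> B)"
    by (auto simp: grid_padding_def)
  ultimately show "finite ((S \<union> grid_padding D S) \<inter> B)"
    by (meson finite_Un finite_subset)
qed

lemma regular_IC_Un_grid_padding:
  assumes "D > 0"
  shows "regular_IC (S \<union> grid_padding D (S :: (real^'n) set))"
  unfolding regular_IC_def
proof (intro exI[of _ "real CARD('n) * (D / 2) + D + 1"] conjI ballI subsetI)
  show "real CARD('n) * (D / 2) + D + 1 > 0"
    using assms by (simp add: add_pos_pos)
next
  fix s x assume x: "x \<in> voronoi (S \<union> grid_padding D S) s"
  obtain p where "p \<in> grid D" and p: "dist x p \<le> real CARD('n) * (D / 2)"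
    using grid_covering_radius[OF assms] by blast
  have "dist x s < real CARD('n) * (D / 2) + D + 1"
  proof (cases "p \<in> grid_padding D S")
    case True
    then have "dist x s \<le> dist x p"
      using x by (auto simp: voronoi_def)
    then show ?thesis
      using p assms by linarith
  next
    case False
    then obtain s' where "s' \<in> S" and "dist p s' < D"
      using \<open>p \<in> grid D\<close> by (auto simp: grid_padding_def not_le)
    then have "dist x s \<le> dist x s'"
      using x by (auto simp: voronoi_def)
    also have "\<dots> \<le> dist x p + dist p s'"
      by (rule dist_triangle)
    finally show ?thesis
      using p \<open>dist p s' < D\<close> by linarith
  qed
  then show "x \<in> ball s (real CARD('n) * (D / 2) + D + 1)"
    by (simp add: dist_commute)
qed

text \<open>A competitor of \<open>s\<close> that beats it at \<open>s + z\<close> but lies at distance \<open>\<ge> D\<close> from \<open>s\<close> forces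
  \<open>norm z \<ge> D / 2\<close>.\<close>

lemma error_region_Un_subset:
  fixes S T :: "(real^'n) set"
  assumes "\<And>t. t \<in> T \<Longrightarrow> t \<notin> S \<Longrightarrow> D \<le> dist t s"
  shows "{z. s + z \<notin> voronoi T s} \<subseteq> {z. s + z \<notin> voronoi S s} \<union> {z. D / 2 \<le> norm z}"
proof
  fix z assume "z \<in> {z. s + z \<notin> voronoi T s}"
  then obtain t where "t \<in> T" and t: "dist (s + z) t < dist (s + z) s"
    by (auto simp: voronoi_def not_le)
  show "z \<in> {z. s + z \<notin> voronoi S s} \<union> {z. D / 2 \<le> norm z}"
  proof (cases "t \<in> S")
    case True
    then show ?thesis
      using t by (auto simp: voronoi_def not_le)
  next
    case False
    then have "D \<le> dist t s"
      using assms \<open>t \<in> T\<close> by blast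
    also have "\<dots> \<le> dist t (s + z) + dist (s + z) s"
      by (rule dist_triangle)
    finally have "D \<le> 2 * norm z"
      using t by (simp add: dist_commute dist_norm)
    then show ?thesis
      by simp
  qed
qed

lemma err_prob_le_err_prob_add_tail:
  fixes S T :: "(real^'n) set"
  assumes "\<sigma> > 0" and "\<And>t. t \<in> T \<Longrightarrow> t \<notin> S \<Longrightarrow> D \<le> dist t s"
  shows "err_prob \<sigma> T s \<le> err_prob \<sigma> S s + measure (gauss_noise \<sigma>) {z::real^'n. D / 2 \<le> norm z}"
proof -
  interpret finite_measure "gauss_noise \<sigma> :: (real^'n) measure"
    by (rule finite_measure_gauss_noise[OF assms(1)])
  have tail: "{z::real^'n. D / 2 \<le> norm z} \<in> sets borel"
    by measurable
  have sub: "{z. s + z \<notin> voronoi T s} \<subseteq> {z. s + z \<notin> voronoi S s} \<union> {z. D / 2 \<le> norm z}"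
    using assms(2) by (rule error_region_Un_subset)
  have "err_prob \<sigma> T s
      \<le> measure (gauss_noise \<sigma>) ({z. s + z \<notin> voronoi S s} \<union> {z. D / 2 \<le> norm z})"
    unfolding err_prob_def
    by (rule finite_measure_mono[OF sub])
      (subst sets_gauss_noise, rule sets.Un[OF error_region_borel tail])
  also have "\<dots> \<le> err_prob \<sigma> S s + measure (gauss_noise \<sigma>) {z::real^'n. D / 2 \<le> norm z}"
    unfolding err_prob_def
    by (rule measure_Un_le) (simp_all only: sets_gauss_noise error_region_borel tail)
  finally show ?thesis .
qed

lemma err_prob_Un_grid_padding_le:
  fixes S :: "(real^'n) set"
  assumes "\<sigma> > 0" and "D > 0" and "s \<in> S \<union> grid_padding D S"
  shows "err_prob \<sigma> (S \<union> grid_padding D S) s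
           \<le> (if s \<in> S then err_prob \<sigma> S s else 0) + measure (gauss_noise \<sigma>) {z::real^'n. D / 2 \<le> norm z}"
proof (cases "s \<in> S")
  case True
  have "err_prob \<sigma> (S \<union> grid_padding D S) s \<le> err_prob \<sigma> S s + measure (gauss_noise \<sigma>) {z::real^'n. D / 2 \<le> norm z}"
    using assms(1) True by (intro err_prob_le_err_prob_add_tail) (auto simp: grid_padding_def dist_commute)
  then show ?thesis
    using True by simp
next
  case False
  then have "s \<in> grid_padding D S"
    using assms(3) by blast
  then have "err_prob \<sigma> (S \<union> grid_padding D S) s \<le> err_prob \<sigma> {s} s + measure (gauss_noise \<sigma>) {z::real^'n. D / 2 \<le> norm z}"
    using assms(1,2) grid_separated[OF assms(2)]
    by (intro err_prob_le_err_prob_add_tail) (auto simp: grid_padding_def dist_commute)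
  moreover have "err_prob \<sigma> {s} s = 0"
    by (simp add: err_prob_def voronoi_def)
  ultimately show ?thesis
    using False by simp
qed

lemma average_error_Un_grid_padding_le:
  fixes S :: "(real^'n) set" and h :: "real^'n"
  assumes "\<sigma> > 0" and "D > 0" and "IC S"
  defines "T \<equiv> S \<union> grid_padding D S"
  shows "(\<Sum>s\<in>T \<inter> Hmap h ` Cb a. err_prob \<sigma> T s) / real (M_count T h a)
     \<le> (\<Sum>s\<in>S \<inter> Hmap h ` Cb a. err_prob \<sigma> S s) / real (M_count S h a)
        + measure (gauss_noise \<sigma>) {z::real^'n. D / 2 \<le> norm z}"
proof -
  define W where "W = Hmap h ` Cb a"
  have "bounded W"
    unfolding W_def by (rule bounded_Hmap_image[OF bounded_Cb])
  then have "finite (T \<inter> W)"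
    using IC_Un_grid_padding[OF assms(3,2)] unfolding T_def IC_def by blast
  have split: "T \<inter> W = (S \<inter> W) \<union> (grid_padding D S \<inter> W)"
    by (auto simp: T_def)
  have "(\<Sum>s\<in>(S \<inter> W) \<union> (grid_padding D S \<inter> W). err_prob \<sigma> T s)
          / card ((S \<inter> W) \<union> (grid_padding D S \<inter> W))
      \<le> (\<Sum>s\<in>S \<inter> W. err_prob \<sigma> S s) / card (S \<inter> W)
          + measure (gauss_noise \<sigma>) {z::real^'n. D / 2 \<le> norm z}"
  proof (rule average_Un_le)
    show "finite (S \<inter> W)" and "finite (grid_padding D S \<inter> W)"
      using \<open>finite (T \<inter> W)\<close> split by (auto intro: finite_subset)
    show "(S \<inter> W) \<inter> (grid_padding D S \<inter> W) = {}"
      using assms(2) by (force simp: grid_padding_def)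
    fix s assume "s \<in> S \<inter> W"
    then show "err_prob \<sigma> T s \<le> err_prob \<sigma> S s + measure (gauss_noise \<sigma>) {z::real^'n. D / 2 \<le> norm z}"
      using err_prob_Un_grid_padding_le[OF assms(1,2), of s S] by (simp add: T_def)
  next
    fix s assume "s \<in> grid_padding D S \<inter> W"
    moreover from this have "s \<notin> S"
      using assms(2) by (force simp: grid_padding_def)
    ultimately show "err_prob \<sigma> T s \<le> measure (gauss_noise \<sigma>) {z::real^'n. D / 2 \<le> norm z}"
      using err_prob_Un_grid_padding_le[OF assms(1,2), of s S] by (simp add: T_def)
  qed (simp_all add: err_prob_def)
  then show ?thesis
    by (simp only: M_count_def W_def[symmetric] split)
qed

lemma avg_err_Un_grid_padding_le:
  fixes S :: "(real^'n) set" and h :: "real^'n"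
  assumes "\<sigma> > 0" and "D > 0" and "IC S"
  shows "avg_err \<sigma> (S \<union> grid_padding D S) h
           \<le> avg_err \<sigma> S h + ereal (measure (gauss_noise \<sigma>) {z::real^'n. D / 2 \<le> norm z})"
proof -
  have "avg_err \<sigma> (S \<union> grid_padding D S) h
      \<le> Limsup at_top (\<lambda>a. ereal ((\<Sum>s\<in>S \<inter> Hmap h ` Cb a. err_prob \<sigma> S s) / real (M_count S h a))
          + ereal (measure (gauss_noise \<sigma>) {z::real^'n. D / 2 \<le> norm z}))"
    unfolding avg_err_def
    using average_error_Un_grid_padding_le[OF assms] by (intro Limsup_mono always_eventually) simp
  also have "\<dots> = avg_err \<sigma> S h + ereal (measure (gauss_noise \<sigma>) {z::real^'n. D / 2 \<le> norm z})"
    unfolding avg_err_def by (rule Limsup_add_ereal_right) auto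
  finally show ?thesis .
qed

lemma regular_padding_exists:
  fixes S :: "(real^'n) set" and h :: "real^'n"
  assumes "\<sigma> > 0" and "IC S" and "e > 0"
  shows "\<exists>T. IC T \<and> regular_IC T \<and> density_rc S h \<le> density_rc T h
             \<and> avg_err \<sigma> T h \<le> avg_err \<sigma> S h + ereal e"
proof -
  obtain D0 where "D0 > 0" and tail: "measure (gauss_noise \<sigma>) {z::real^'n. D0 \<le> norm z} \<le> e"
    using gauss_noise_tail_le[OF assms(1,3)] by blast
  define D where "D = 2 * D0"
  have "D > 0"
    using \<open>D0 > 0\<close> by (simp add: D_def)
  define T where "T = S \<union> grid_padding D S"
  have "IC T" and "regular_IC T"
    unfolding T_def using IC_Un_grid_padding[OF assms(2) \<open>D > 0\<close>] regular_IC_Un_grid_padding[OF \<open>D > 0\<close>]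
    by auto
  moreover have "density_rc S h \<le> density_rc T h"
    using \<open>IC T\<close> by (intro density_rc_mono) (auto simp: T_def)
  moreover have "avg_err \<sigma> T h \<le> avg_err \<sigma> S h + ereal e"
    using avg_err_Un_grid_padding_le[OF assms(1) \<open>D > 0\<close> assms(2), of h] tail
    by (simp add: T_def D_def) (metis add_left_mono ereal_less_eq(3) order_trans)
  ultimately show ?thesis
    by blast
qed

lemma prob_space_fading:
  assumes "regular_fading_pdf f"
  shows "prob_space (density lborel (\<lambda>x. ennreal (f x)))"
  using assms unfolding regular_fading_pdf_def
  by (intro prob_spaceI) (auto simp: emeasure_density)

lemma measure_fading_law_min_le_eq_0:
  assumes "regular_fading_pdf f" and "t < 0"
  shows "measure (fading_law f :: ('n::finite \<Rightarrow> real) measure) {H. Min (range H) \<le> t} = 0"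
proof -
  define M where "M = density lborel (\<lambda>x. ennreal (f x))"
  have [measurable]: "f \<in> borel_measurable borel" and f0: "\<And>x. x \<le> 0 \<Longrightarrow> f x = 0"
    using assms(1) unfolding regular_fading_pdf_def by auto
  interpret product_prob_space "\<lambda>_::'n. M" UNIV
    by (rule product_prob_spaceI) (use prob_space_fading[OF assms(1)] M_def in auto)
  let ?P = "Pi\<^sub>M (UNIV::'n set) (\<lambda>_. M)"
  have "emeasure ?P {x\<in>space ?P. x i \<in> {..0}} = 0" for i
  proof -
    have "emeasure ?P {x\<in>space ?P. x i \<in> {..0}} = emeasure M {..0}"
      by (rule emeasure_PiM_Collect_single) (auto simp: M_def)
    also have "\<dots> = (\<integral>\<^sup>+ x. ennreal (f x) * indicator {..0} x \<partial>lborel)"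
      by (simp add: M_def emeasure_density)
    also have "\<dots> = 0"
      by (rule nn_integral_0_iff_AE[THEN iffD2]) (auto simp: f0 indicator_def)
    finally show ?thesis .
  qed
  moreover have "{x\<in>space ?P. x i \<in> {..0}} \<in> sets ?P" for i
    unfolding M_def by measurable
  ultimately have null: "(\<Union>i. {x\<in>space ?P. x i \<in> {..0}}) \<in> null_sets ?P"
    by (intro null_sets_UN') (auto simp: null_sets_def)
  have "{H. Min (range H) \<le> t} \<subseteq> (\<Union>i. {x\<in>space ?P. x i \<in> {..0}})"
  proof
    fix H :: "'n \<Rightarrow> real" assume "H \<in> {H. Min (range H) \<le> t}"
    moreover have "Min (range H) \<in> range H"
      by (intro Min_in) auto
    then obtain i where "Min (range H) = H i"
      by (rule rangeE)
    ultimately have "H i \<le> t"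
      by simp
    then have "H \<in> {x\<in>space ?P. x i \<in> {..0}}"
      using assms(2) by (simp add: space_PiM M_def)
    then show "H \<in> (\<Union>i. {x\<in>space ?P. x i \<in> {..0}})"
      by blast
  qed
  then have "emeasure ?P {H. Min (range H) \<le> t} \<le> emeasure ?P (\<Union>i. {x\<in>space ?P. x i \<in> {..0}})"
    using null by (intro emeasure_mono) auto
  then show ?thesis
    using null_setsD1[OF null] by (simp add: measure_def fading_law_def M_def)
qed

lemma hstar_nonneg:
  assumes "regular_fading_pdf f" and "\<xi> > 0" and "is_hstar f TYPE('n::finite) \<xi> t"
  shows "0 \<le> t"
proof (rule ccontr)
  assume "\<not> 0 \<le> t"
  then have "measure (fading_law f :: ('n \<Rightarrow> real) measure) {H. Min (range H) \<le> t} = 0"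
    using assms(1) by (intro measure_fading_law_min_le_eq_0) auto
  with assms(2,3) show False
    by (simp add: is_hstar_def)
qed

lemma channel_gains_pos_if_not_xi_strong:
  assumes "regular_fading_pdf f" and "\<xi> > 0" and "is_hstar f TYPE('n) \<xi> t"
    and "\<not> xi_strong t (h :: real^'n)"
  shows "h $ i > 0"
proof -
  have "t < hmin h"
    using assms(4) by (simp add: xi_strong_def)
  also have "hmin h \<le> h $ i"
    unfolding hmin_def by (intro Min_le) auto
  finally show ?thesis
    using hstar_nonneg[OF assms(1-3)] by linarith
qed

theorem lemma4p2:
  fixes f :: "real \<Rightarrow> real" and \<sigma> \<xi> hstar :: real
    and S :: "(real^'n) set" and h :: "real^'n"
  assumes "regular_fading_pdf f"
    and "\<sigma> > 0"
    and "IC S"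
    and "\<xi> > 0"
    and "is_hstar f TYPE('n) \<xi> hstar"
    and "\<not> xi_strong hstar h"
  shows "\<exists>T. IC T \<and> regular_IC T \<and>
           density_rc T h \<ge> density_rc (Hmap h ` S) h / ereal (1 + \<xi>) \<and>
           avg_err \<sigma> T h \<le> avg_err \<sigma> (Hmap h ` S) h * ereal (1 + \<xi>)"
proof -
  have h_pos: "\<And>i. h $ i > 0"
    using channel_gains_pos_if_not_xi_strong[OF assms(1,4,5,6)] .
  then have "IC (Hmap h ` S)"
    using IC_Hmap_image[OF assms(3)] by (metis less_irrefl)
  show ?thesis
  proof (cases "avg_err \<sigma> (Hmap h ` S) h \<le> 0")
    case True
    then have "density_rc (Hmap h ` S) h = 0"
      using avg_err_pos_if_density_rc_pos[OF assms(2) \<open>IC (Hmap h ` S)\<close> h_pos] density_rc_nonneg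
      by (metis antisym not_le)
    then show ?thesis
      using IC_empty regular_IC_empty avg_err_nonneg[of \<sigma> "Hmap h ` S" h] True
      by (intro exI[of _ "{}"]) (simp add: density_rc_empty avg_err_empty)
  next
    case False
    then obtain e where "e > 0"
      and e: "avg_err \<sigma> (Hmap h ` S) h + ereal e \<le> avg_err \<sigma> (Hmap h ` S) h * ereal (1 + \<xi>)"
      using ereal_exists_add_le_mult assms(4) by (metis not_le)
    obtain T where "IC T" "regular_IC T" "density_rc (Hmap h ` S) h \<le> density_rc T h"
      and "avg_err \<sigma> T h \<le> avg_err \<sigma> (Hmap h ` S) h + ereal e"
      using regular_padding_exists[OF assms(2) \<open>IC (Hmap h ` S)\<close> \<open>e > 0\<close>] by blast
    then show ?thesis
      using e ereal_divide_le_self[OF density_rc_nonneg assms(4)] by (blast intro: order_trans)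
  qed
qed

end
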